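(* Let $\mathcal{H}$ be a complex Hilbert space, let $T\in\mathbb{B}(\mathcal{H})$ and let $N(\cdot)$ be an algebra norm on $\mathbb{B}(\mathcal{H})$. Then $$\frac{N\big(TT^* + T^*T\big)}{4} + \frac{1}{2}\sup_{\varphi \in \mathbb{R}}\Big|N^2\big({\rm Re}(e^{i\varphi}T)\big) - N^2\big({\rm Im}(e^{i\varphi}T)\big)\Big| \leq w^2_{N}(T).$$
   Context: $\mathbb{B}(\mathcal{H})$ is the algebra of bounded linear operators on $\mathcal{H}$. A norm $N(\cdot)$ on $\mathbb{B}(\mathcal{H})$ is an algebra norm if $N(TS)\le N(T)N(S)$ for all $T,S\in\mathbb{B}(\mathcal{H})$. For $A\in\mathbb{B}(\mathcal{H})$, ${\rm Re}(A)=\frac{A+A^*}{2}$ and ${\rm Im}(A)=\frac{A-A^*}{2i}$. The generalized numerical radius is $w_N(T)=\sup_{\theta\in\mathbb{R}} N\big({\rm Re}(e^{i\theta}T)\big)$. *)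

theory Defs
  imports "HOL-Analysis.Analysis"
begin

class complex_vector = real_vector +
  fixes scaleC :: "complex \<Rightarrow> 'a \<Rightarrow> 'a"
  assumes scaleC_add_right: "scaleC a (x + y) = scaleC a x + scaleC a y"
    and scaleC_add_left: "scaleC (a + b) x = scaleC a x + scaleC b x"
    and scaleC_scaleC: "scaleC a (scaleC b x) = scaleC (a * b) x"
    and scaleC_one: "scaleC 1 x = x"
    and scaleR_scaleC: "scaleR r x = scaleC (complex_of_real r) x"

class complex_inner = complex_vector + real_normed_vector +
  fixes cinner :: "'a \<Rightarrow> 'a \<Rightarrow> complex"
  assumes cinner_conj: "cinner x y = cnj (cinner y x)"
    and cinner_add_right: "cinner x (y + z) = cinner x y + cinner x z"
    and cinner_scaleC_right: "cinner x (scaleC c y) = c * cinner x y"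
    and cinner_nonneg: "0 \<le> Re (cinner x x)"
    and cinner_eq_zero_iff: "cinner x x = 0 \<longleftrightarrow> x = 0"
    and norm_cinner: "norm x = sqrt (Re (cinner x x))"

class chilbert_space = complex_inner + complete_space

definition bounded_clinear :: "('a::complex_inner \<Rightarrow> 'b::complex_inner) \<Rightarrow> bool" where
  "bounded_clinear f \<longleftrightarrow> bounded_linear f \<and> (\<forall>c x. f (scaleC c x) = scaleC c (f x))"

definition BH :: "('a::complex_inner \<Rightarrow> 'a) set" where
  "BH = {T. bounded_clinear T}"

definition cadjoint :: "('a::complex_inner \<Rightarrow> 'a) \<Rightarrow> ('a \<Rightarrow> 'a)" where
  "cadjoint T = (THE S. \<forall>x y. cinner (T x) y = cinner x (S y))"

definition op_scale :: "complex \<Rightarrow> ('a::complex_inner \<Rightarrow> 'a) \<Rightarrow> ('a \<Rightarrow> 'a)" where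
  "op_scale c T = (\<lambda>x. scaleC c (T x))"

definition op_Re :: "('a::complex_inner \<Rightarrow> 'a) \<Rightarrow> ('a \<Rightarrow> 'a)" where
  "op_Re A = (\<lambda>x. scaleC (1/2) (A x + cadjoint A x))"

definition op_Im :: "('a::complex_inner \<Rightarrow> 'a) \<Rightarrow> ('a \<Rightarrow> 'a)" where
  "op_Im A = (\<lambda>x. scaleC (1 / (2 * \<i>)) (A x - cadjoint A x))"

definition algebra_norm :: "(('a::complex_inner \<Rightarrow> 'a) \<Rightarrow> real) \<Rightarrow> bool" where
  "algebra_norm N \<longleftrightarrow>
     (\<forall>T\<in>BH. 0 \<le> N T) \<and>
     (\<forall>T\<in>BH. N T = 0 \<longleftrightarrow> T = (\<lambda>x. 0)) \<and>
     (\<forall>T\<in>BH. \<forall>c. N (op_scale c T) = cmod c * N T) \<and>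
     (\<forall>T\<in>BH. \<forall>S\<in>BH. N (\<lambda>x. T x + S x) \<le> N T + N S) \<and>
     (\<forall>T\<in>BH. \<forall>S\<in>BH. N (T \<circ> S) \<le> N T * N S)"

definition gen_numrad :: "(('a::complex_inner \<Rightarrow> 'a) \<Rightarrow> real) \<Rightarrow> ('a \<Rightarrow> 'a) \<Rightarrow> real" where
  "gen_numrad N T = (SUP \<theta>::real. N (op_Re (op_scale (exp (\<i> * complex_of_real \<theta>)) T)))"

end

theory Submission
  imports Defs
begin

(*
  Put A = e^{i phi} T. Then Re(A)^2 + Im(A)^2 = (A A^* + A^* A) / 2 = (T T^* + T^* T) / 2, so
  submultiplicativity gives N(T T^* + T^* T) <= 2 (a^2 + b^2) with a = N(Re A) and b = N(Im A).
  Since Im(e^{i phi} T) = Re(e^{i (phi - pi/2)} T), both a and b are at most w = w_N(T), hence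
  |a^2 - b^2| = 2 max(a^2, b^2) - (a^2 + b^2) <= 2 w^2 - N(T T^* + T^* T) / 2.
  The adjoint is a definite description, so it must first be shown to exist: this is the Riesz
  representation theorem, obtained from the point of least norm on a closed affine hyperplane.
*)

interpretation scaleC_right: additive "scaleC c :: 'a::complex_vector \<Rightarrow> 'a"
  by standard (rule scaleC_add_right)

interpretation scaleC_left: additive "\<lambda>c. scaleC c x :: 'a::complex_vector"
  by standard (rule scaleC_add_left)

interpretation cinner_right: additive "cinner x :: 'a::complex_inner \<Rightarrow> complex"
  by standard (rule cinner_add_right)

lemma cinner_add_left: "cinner (x + y) (z::'a::complex_inner) = cinner x z + cinner y z"
  by (metis cinner_add_right cinner_conj complex_cnj_add)

lemma cinner_scaleC_left: "cinner (scaleC c x) (y::'a::complex_inner) = cnj c * cinner x y"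
  by (metis cinner_conj cinner_scaleC_right complex_cnj_mult)

lemma cinner_zero_left [simp]: "cinner 0 (x::'a::complex_inner) = 0"
  by (metis cinner_conj cinner_right.zero complex_cnj_zero)

lemma cinner_self: "cinner x x = complex_of_real ((norm (x::'a::complex_inner))\<^sup>2)"
proof -
  have "Im (cinner x x) = 0"
    using cinner_conj[of x x] by (metis Reals_cnj_iff complex_is_Real_iff)
  then show ?thesis
    by (simp add: norm_cinner cinner_nonneg complex_eq_iff)
qed

lemma cinner_ext: "(\<And>x. cinner x u = cinner x v) \<Longrightarrow> u = (v::'a::complex_inner)"
  by (metis cinner_eq_zero_iff cinner_right.diff eq_iff_diff_eq_0)

lemma norm_add_scaleC_power2:
  "(norm (x + scaleC t k))\<^sup>2
     = (norm x)\<^sup>2 + 2 * Re (t * cinner x k) + (cmod t)\<^sup>2 * (norm (k::'a::complex_inner))\<^sup>2"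
proof -
  have "complex_of_real ((norm (x + scaleC t k))\<^sup>2)
      = cinner x x + (t * cinner x k + cnj (t * cinner x k)) + (cnj t * t) * cinner k k"
    unfolding cinner_self[symmetric]
    by (simp add: cinner_add_left cinner_add_right cinner_scaleC_left cinner_scaleC_right
        cinner_conj[of k x] algebra_simps)
  also have "\<dots> = complex_of_real ((norm x)\<^sup>2 + 2 * Re (t * cinner x k) + (cmod t)\<^sup>2 * (norm k)\<^sup>2)"
    unfolding complex_add_cnj cinner_self mult.commute[of "cnj t"] complex_norm_square[symmetric]
    by simp
  finally show ?thesis
    using of_real_eq_iff by blast
qed

lemma parallelogram_law:
  "(norm (x + y))\<^sup>2 + (norm (x - y))\<^sup>2 = 2 * (norm x)\<^sup>2 + 2 * (norm (y::'a::complex_inner))\<^sup>2"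
  using norm_add_scaleC_power2[of x 1 y] norm_add_scaleC_power2[of x "-1" y]
  by (simp add: scaleC_one scaleC_left.minus)

lemma norm_scaleC: "norm (scaleC c (x::'a::complex_inner)) = cmod c * norm x"
  using norm_add_scaleC_power2[of 0 c x] by (simp add: power_mult_distrib[symmetric])

lemma cmod_cinner_le: "cmod (cinner x y) \<le> norm x * norm (y::'a::complex_inner)"
proof (cases "y = 0")
  case True
  then show ?thesis by (simp add: cinner_right.zero)
next
  case False
  define a where "a = cinner x y"
  define n where "n = (norm y)\<^sup>2"
  define t where "t = - cnj a / complex_of_real n"
  have n: "n > 0"
    using False by (simp add: n_def)
  have Re_ta: "Re (t * a) = - (cmod a)\<^sup>2 / n"
    unfolding t_def by (simp add: mult.commute[of "cnj a"] complex_norm_square[symmetric])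
  have cmod_t: "(cmod t)\<^sup>2 = (cmod a)\<^sup>2 / n\<^sup>2"
    unfolding t_def by (simp add: norm_divide power_divide)
  have "0 \<le> (norm x)\<^sup>2 + 2 * Re (t * a) + (cmod t)\<^sup>2 * n"
    using norm_add_scaleC_power2[of x t y] zero_le_power2 unfolding a_def n_def by metis
  also have "\<dots> = (norm x)\<^sup>2 - (cmod a)\<^sup>2 / n"
    using n unfolding Re_ta cmod_t by (simp add: field_simps power2_eq_square)
  finally have "(cmod a)\<^sup>2 / n \<le> (norm x)\<^sup>2"
    by simp
  then have "(cmod a)\<^sup>2 \<le> (norm x * norm y)\<^sup>2"
    using n by (simp add: n_def field_simps)
  then show ?thesis
    by (simp add: a_def power2_le_iff_abs_le)
qed

lemma bounded_linear_cinner_right: "bounded_linear (cinner y :: 'a::complex_inner \<Rightarrow> complex)"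
proof (rule bounded_linear_intro[where K = "norm y"])
  show "cinner y (r *\<^sub>R x) = r *\<^sub>R cinner y x" for r x
    by (simp add: scaleR_scaleC cinner_scaleC_right scaleR_conv_of_real)
  show "norm (cinner y x) \<le> norm x * norm y" for x
    using cmod_cinner_le[of y x] by (simp add: mult.commute)
qed (rule cinner_add_right)

lemma Cauchy_if_norm_diff_power2_le:
  fixes X :: "nat \<Rightarrow> 'a::real_normed_vector"
  assumes bound: "\<And>m n. (norm (X m - X n))\<^sup>2 \<le> e m + e n" and e: "e \<longlonglongrightarrow> 0"
  shows "Cauchy X"
proof (rule CauchyI)
  fix r :: real
  assume r: "0 < r"
  then obtain M where M: "\<And>n. n \<ge> M \<Longrightarrow> norm (e n) < r\<^sup>2 / 2"
    using LIMSEQ_D[OF e, of "r\<^sup>2 / 2"] by auto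
  have "norm (X m - X n) < r" if "m \<ge> M" "n \<ge> M" for m n
  proof -
    have "(norm (X m - X n))\<^sup>2 < r\<^sup>2"
      using bound[of m n] M[OF \<open>m \<ge> M\<close>] M[OF \<open>n \<ge> M\<close>] by auto
    then show ?thesis
      using r by (simp add: power_less_imp_less_base)
  qed
  then show "\<exists>M. \<forall>m\<ge>M. \<forall>n\<ge>M. norm (X m - X n) < r"
    by blast
qed

lemma min_norm_point_exists:
  fixes S :: "'a::chilbert_space set"
  assumes "closed S" "convex S" "S \<noteq> {}"
  shows "\<exists>x0\<in>S. \<forall>y\<in>S. norm x0 \<le> norm y"
proof -
  define D where "D = Inf ((\<lambda>x. (norm x)\<^sup>2) ` S)"
  have bdd: "bdd_below ((\<lambda>x. (norm x)\<^sup>2) ` S)"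
    by (rule bdd_belowI[of _ 0]) auto
  have D_le: "D \<le> (norm y)\<^sup>2" if "y \<in> S" for y
    unfolding D_def by (rule cINF_lower[OF bdd that])
  have "\<exists>x\<in>S. (norm x)\<^sup>2 < D + inverse (real (Suc n))" for n
    using cInf_less_iff[OF _ bdd, of "D + inverse (real (Suc n))"] \<open>S \<noteq> {}\<close>
    by (simp add: D_def)
  then obtain xs where xs_S: "\<And>n. xs n \<in> S"
    and xs_norm: "\<And>n. (norm (xs n))\<^sup>2 < D + inverse (real (Suc n))"
    by metis
  \<comment> \<open>The midpoint of two points of S lies in S, so the parallelogram law forces them together.\<close>
  have "(norm (xs m - xs n))\<^sup>2 \<le> 2 * inverse (real (Suc m)) + 2 * inverse (real (Suc n))" for m n
  proof -
    have "(1/2) *\<^sub>R xs m + (1/2) *\<^sub>R xs n \<in> S"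
      by (intro convexD[OF \<open>convex S\<close>] xs_S) auto
    then have "D \<le> (norm ((1/2) *\<^sub>R (xs m + xs n)))\<^sup>2"
      by (simp add: D_le scaleR_add_right)
    then have "4 * D \<le> (norm (xs m + xs n))\<^sup>2"
      by (simp add: power_divide)
    then show ?thesis
      using parallelogram_law[of "xs m" "xs n"] xs_norm[of m] xs_norm[of n] by linarith
  qed
  moreover have "(\<lambda>n. 2 * inverse (real (Suc n))) \<longlonglongrightarrow> 0"
    using tendsto_mult_right_zero[OF LIMSEQ_inverse_real_of_nat] by simp
  ultimately have "Cauchy xs"
    by (rule Cauchy_if_norm_diff_power2_le)
  then obtain x0 where lim: "xs \<longlonglongrightarrow> x0"
    using Cauchy_convergent_iff convergent_def by blast
  have "x0 \<in> S"
    using \<open>closed S\<close> xs_S lim by (rule closed_sequentially)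
  moreover have "(norm x0)\<^sup>2 \<le> D"
  proof (rule LIMSEQ_le)
    show "(\<lambda>n. (norm (xs n))\<^sup>2) \<longlonglongrightarrow> (norm x0)\<^sup>2"
      by (intro tendsto_intros lim)
    show "(\<lambda>n. D + inverse (real (Suc n))) \<longlonglongrightarrow> D"
      using tendsto_add[OF tendsto_const LIMSEQ_inverse_real_of_nat, of D] by simp
  qed (use xs_norm less_imp_le in blast)
  ultimately show ?thesis
    using D_le by (meson order_trans power2_le_imp_le norm_ge_zero)
qed

lemma cinner_eq_0_if_norm_le_add_scaleC:
  assumes min: "\<And>t. norm x \<le> norm (x + scaleC t k)"
  shows "cinner x (k::'a::complex_inner) = 0"
proof -
  define a where "a = cinner x k"
  define s where "s = 1 / ((norm k)\<^sup>2 + 1)"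
  have s: "0 < s" "s * (norm k)\<^sup>2 < 1"
    unfolding s_def by (simp_all add: add_pos_nonneg field_simps)
  have Re_a: "Re (- complex_of_real s * cnj a * a) = - s * (cmod a)\<^sup>2"
    by (simp add: mult.assoc mult.commute[of "cnj a"] complex_norm_square[symmetric])
  \<comment> \<open>For t = - s cnj a with s small, the term linear in s dominates the quadratic one.\<close>
  have "(norm x)\<^sup>2 \<le> (norm (x + scaleC (- complex_of_real s * cnj a) k))\<^sup>2"
    using min by (simp add: power_mono)
  also have "\<dots> = (norm x)\<^sup>2 - s * (cmod a)\<^sup>2 * (2 - s * (norm k)\<^sup>2)"
    unfolding norm_add_scaleC_power2 a_def[symmetric] Re_a
    using s by (simp add: norm_mult power2_eq_square algebra_simps)
  finally have "s * (cmod a)\<^sup>2 * (2 - s * (norm k)\<^sup>2) \<le> 0"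
    by simp
  then have "(cmod a)\<^sup>2 \<le> 0"
    using s by (simp add: mult_le_0_iff)
  then show ?thesis
    by (simp add: a_def)
qed

lemma riesz_representation:
  fixes f :: "'a::chilbert_space \<Rightarrow> complex"
  assumes f: "bounded_linear f" and f_scaleC: "\<And>c x. f (scaleC c x) = c * f x"
  shows "\<exists>y. \<forall>x. f x = cinner y x"
proof (cases "\<forall>x. f x = 0")
  case True
  then show ?thesis by (intro exI[of _ 0]) simp
next
  case False
  interpret f: bounded_linear f by (rule f)
  \<comment> \<open>The point of least norm on the hyperplane f = 1 is orthogonal to the kernel of f.\<close>
  obtain u where "f u \<noteq> 0"
    using False by blast
  then have "scaleC (1 / f u) u \<in> f -` {1}"
    by (simp add: f_scaleC)
  moreover have "closed (f -` {1})"
    by (rule continuous_closed_vimage) (simp_all add: linear_continuous_at f)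
  moreover have "convex (f -` {1})"
    by (rule convex_linear_vimage) (simp_all add: f.linear)
  ultimately have "\<exists>x0 \<in> f -` {1}. \<forall>y \<in> f -` {1}. norm x0 \<le> norm y"
    by (intro min_norm_point_exists) auto
  then obtain x0 where x0: "f x0 = 1" and min: "\<And>y. f y = 1 \<Longrightarrow> norm x0 \<le> norm y"
    by auto
  have orth: "cinner x0 k = 0" if "f k = 0" for k
    using that by (intro cinner_eq_0_if_norm_le_add_scaleC min) (simp add: f.add f_scaleC x0)
  have "x0 \<noteq> 0"
    using x0 f.zero by auto
  show ?thesis
  proof (intro exI allI)
    fix x
    have "cinner x0 (x - scaleC (f x) x0) = 0"
      by (rule orth) (simp add: f.diff f_scaleC x0)
    then have "cinner x0 x = f x * complex_of_real ((norm x0)\<^sup>2)"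
      by (simp add: cinner_right.diff cinner_scaleC_right cinner_self)
    then show "f x = cinner (scaleC (complex_of_real (1 / (norm x0)\<^sup>2)) x0) x"
      using \<open>x0 \<noteq> 0\<close> by (simp add: cinner_scaleC_left)
  qed
qed

lemma BH_bounded_linear: "T \<in> BH \<Longrightarrow> bounded_linear T"
  and BH_scaleC: "T \<in> BH \<Longrightarrow> T (scaleC c x) = scaleC c (T x)"
  by (simp_all add: BH_def bounded_clinear_def)

lemma BH_add_apply: "T \<in> BH \<Longrightarrow> T (x + y) = T x + T y"
  and BH_diff_apply: "T \<in> BH \<Longrightarrow> T (x - y) = T x - T y"
  by (simp_all add: BH_bounded_linear bounded_linear.linear linear_add linear_diff)

lemma BH_intro:
  fixes S :: "'a::complex_inner \<Rightarrow> 'a"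
  assumes "\<And>x y. S (x + y) = S x + S y" and "\<And>c x. S (scaleC c x) = scaleC c (S x)"
    and "\<And>x. norm (S x) \<le> norm x * K"
  shows "S \<in> BH"
  unfolding BH_def bounded_clinear_def
  using assms by (auto simp: scaleR_scaleC intro!: bounded_linear_intro[where K = K])

lemma bounded_linear_scaleC: "bounded_linear (scaleC c :: 'a::complex_inner \<Rightarrow> 'a)"
  by (rule bounded_linear_intro[where K = "cmod c"])
    (simp_all add: scaleC_add_right scaleR_scaleC scaleC_scaleC mult.commute norm_scaleC)

lemma BH_op_scale: "T \<in> BH \<Longrightarrow> op_scale c T \<in> BH"
  unfolding BH_def bounded_clinear_def op_scale_def
  using bounded_linear_compose[OF bounded_linear_scaleC, of T c]
  by (auto simp: o_def scaleC_scaleC mult.commute)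

lemma BH_add: "T \<in> BH \<Longrightarrow> S \<in> BH \<Longrightarrow> (\<lambda>x. T x + S x) \<in> BH"
  unfolding BH_def bounded_clinear_def
  by (auto intro: bounded_linear_add simp: scaleC_add_right)

lemma BH_comp: "T \<in> BH \<Longrightarrow> S \<in> BH \<Longrightarrow> T \<circ> S \<in> BH"
  unfolding BH_def bounded_clinear_def o_def
  by (auto intro: bounded_linear_compose)

lemma cadjoint_eqI:
  assumes "\<And>x y. cinner (T x) y = cinner x (S y)"
  shows "cadjoint T = (S :: 'a::complex_inner \<Rightarrow> 'a)"
  unfolding cadjoint_def
proof (rule the_equality)
  fix S'
  assume "\<forall>x y. cinner (T x) y = cinner x (S' y)"
  then show "S' = S"
    using assms by (intro ext cinner_ext) metis
qed (use assms in blast)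

lemma cinner_cadjoint:
  fixes T :: "'a::chilbert_space \<Rightarrow> 'a"
  assumes T: "T \<in> BH"
  shows "cinner (T x) y = cinner x (cadjoint T y)"
proof -
  have "\<exists>z. \<forall>x. cinner y (T x) = cinner z x" for y
    using bounded_linear_compose[OF bounded_linear_cinner_right BH_bounded_linear[OF T]]
    by (intro riesz_representation) (simp_all add: BH_scaleC[OF T] cinner_scaleC_right)
  then obtain S where "\<And>y x. cinner y (T x) = cinner (S y) x"
    by metis
  then have "cadjoint T = S"
    by (intro cadjoint_eqI) (metis cinner_conj)
  with \<open>\<And>y x. cinner y (T x) = cinner (S y) x\<close> show ?thesis
    by (metis cinner_conj)
qed

lemma cadjoint_BH:
  fixes T :: "'a::chilbert_space \<Rightarrow> 'a"
  assumes T: "T \<in> BH"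
  shows "cadjoint T \<in> BH"
proof -
  let ?S = "cadjoint T"
  obtain K where K: "\<And>x. norm (T x) \<le> norm x * K" "K > 0"
    using bounded_linear.pos_bounded[OF BH_bounded_linear[OF T]] by blast
  show ?thesis
  proof (rule BH_intro[where K = K])
    show "?S (x + y) = ?S x + ?S y" for x y
      by (rule cinner_ext) (simp add: cinner_cadjoint[OF T, symmetric] cinner_add_right)
    show "?S (scaleC c x) = scaleC c (?S x)" for c x
      by (rule cinner_ext) (simp add: cinner_cadjoint[OF T, symmetric] cinner_scaleC_right)
    show "norm (?S y) \<le> norm y * K" for y
    proof -
      have "(norm (?S y))\<^sup>2 = Re (cinner (T (?S y)) y)"
        by (simp add: cinner_cadjoint[OF T] cinner_self)
      also have "\<dots> \<le> norm (T (?S y)) * norm y"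
        using complex_Re_le_cmod cmod_cinner_le order_trans by blast
      also have "\<dots> \<le> norm (?S y) * (K * norm y)"
        using mult_right_mono[OF K(1)[of "?S y"] norm_ge_zero[of y]] by (simp add: mult.assoc)
      finally show ?thesis
        by (cases "?S y = 0") (use K in \<open>simp_all add: power2_eq_square mult.commute\<close>)
    qed
  qed
qed

lemma cadjoint_op_scale:
  fixes T :: "'a::chilbert_space \<Rightarrow> 'a"
  assumes "T \<in> BH"
  shows "cadjoint (op_scale c T) = op_scale (cnj c) (cadjoint T)"
  by (rule cadjoint_eqI)
    (simp add: op_scale_def cinner_scaleC_left cinner_scaleC_right cinner_cadjoint[OF assms])

lemma op_Re_eq_op_scale: "op_Re A = op_scale (1/2) (\<lambda>x. A x + cadjoint A x)"
  by (simp add: op_Re_def op_scale_def)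

lemma op_Re_BH:
  fixes A :: "'a::chilbert_space \<Rightarrow> 'a"
  shows "A \<in> BH \<Longrightarrow> op_Re A \<in> BH"
  unfolding op_Re_eq_op_scale by (intro BH_op_scale BH_add cadjoint_BH)

lemma op_Im_op_scale:
  fixes T :: "'a::chilbert_space \<Rightarrow> 'a"
  assumes T: "T \<in> BH"
  shows "op_Im (op_scale c T) = op_Re (op_scale (- \<i> * c) T)"
proof
  fix x
  have coeff_T: "1 / (2 * \<i>) * c = 1/2 * (- \<i> * c)"
    and coeff_adjoint: "- (1 / (2 * \<i>) * cnj c) = 1/2 * cnj (- \<i> * c)"
    by (simp_all add: field_simps)
  have "op_Im (op_scale c T) x
      = scaleC (1 / (2 * \<i>) * c) (T x) - scaleC (1 / (2 * \<i>) * cnj c) (cadjoint T x)"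
    unfolding op_Im_def cadjoint_op_scale[OF T]
    by (simp add: op_scale_def scaleC_right.diff scaleC_scaleC)
  also have "\<dots> = scaleC (1/2 * (- \<i> * c)) (T x) + scaleC (1/2 * cnj (- \<i> * c)) (cadjoint T x)"
    by (simp only: coeff_T[symmetric] coeff_adjoint[symmetric] scaleC_left.minus diff_conv_add_uminus)
  also have "\<dots> = op_Re (op_scale (- \<i> * c) T) x"
    unfolding op_Re_def cadjoint_op_scale[OF T]
    by (simp add: op_scale_def scaleC_add_right scaleC_scaleC)
  finally show "op_Im (op_scale c T) x = op_Re (op_scale (- \<i> * c) T) x" .
qed

lemma op_Im_BH:
  fixes A :: "'a::chilbert_space \<Rightarrow> 'a"
  assumes "A \<in> BH"
  shows "op_Im A \<in> BH"
  using op_Im_op_scale[OF assms, of 1] op_Re_BH[OF BH_op_scale[OF assms]]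
  by (simp add: op_scale_def scaleC_one)

lemma op_Re_square_add_op_Im_square:
  fixes A :: "'a::chilbert_space \<Rightarrow> 'a"
  assumes A: "A \<in> BH"
  shows "(\<lambda>x. op_Re A (op_Re A x) + op_Im A (op_Im A x))
       = op_scale (1/2) (\<lambda>x. A (cadjoint A x) + cadjoint A (A x))"
proof
  fix x
  let ?B = "cadjoint A"
  have B: "?B \<in> BH"
    using A by (rule cadjoint_BH)
  define p q r s where "p = A (A x)" and "q = A (?B x)" and "r = ?B (A x)" and "s = ?B (?B x)"
  have Re2: "op_Re A (op_Re A x) = scaleC (1/4) ((p + q) + (r + s))"
    unfolding op_Re_def p_def q_def r_def s_def
    by (simp add: BH_add_apply[OF A] BH_add_apply[OF B] BH_scaleC[OF A] BH_scaleC[OF B]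
        scaleC_add_right scaleC_scaleC)
  have Im2: "op_Im A (op_Im A x) = scaleC (- (1/4)) ((p - q) - (r - s))"
    unfolding op_Im_def p_def q_def r_def s_def
    by (simp add: BH_diff_apply[OF A] BH_diff_apply[OF B] BH_scaleC[OF A] BH_scaleC[OF B]
        scaleC_right.diff scaleC_scaleC)
  have "op_Re A (op_Re A x) + op_Im A (op_Im A x) = scaleC (1/4) ((q + r) + (q + r))"
    unfolding Re2 Im2 scaleC_left.minus scaleC_right.diff[symmetric] diff_conv_add_uminus[symmetric]
    by (simp add: algebra_simps)
  also have "\<dots> = scaleC (1/2) (q + r)"
    unfolding scaleC_add_right[of "1/4" "q + r" "q + r"] scaleC_left.add[symmetric] by simp
  finally show "op_Re A (op_Re A x) + op_Im A (op_Im A x)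
      = op_scale (1/2) (\<lambda>x. A (?B x) + ?B (A x)) x"
    by (simp add: op_scale_def q_def r_def)
qed

lemma adjoint_products_op_scale:
  fixes T :: "'a::chilbert_space \<Rightarrow> 'a"
  assumes T: "T \<in> BH" and c: "cmod c = 1"
  shows "(\<lambda>x. op_scale c T (cadjoint (op_scale c T) x) + cadjoint (op_scale c T) (op_scale c T x))
       = (\<lambda>x. T (cadjoint T x) + cadjoint T (T x))"
proof -
  have "c * cnj c = 1" and "cnj c * c = 1"
    using c by (simp_all add: complex_norm_square[symmetric] mult.commute[of "cnj c"])
  then show ?thesis
    unfolding cadjoint_op_scale[OF T]
    by (simp add: op_scale_def BH_scaleC[OF T] BH_scaleC[OF cadjoint_BH[OF T]] scaleC_scaleC
        scaleC_one)
qed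

lemma exp_i_diff_pi_half:
  "exp (\<i> * complex_of_real (\<phi> - pi/2)) = - \<i> * exp (\<i> * complex_of_real \<phi>)"
proof -
  have "exp (\<i> * complex_of_real (\<phi> - pi/2)) = cis (\<phi> + - (pi/2))"
    by (simp add: cis_conv_exp)
  also have "\<dots> = cis \<phi> * - \<i>"
    by (simp only: cis_mult[symmetric] cis_minus_pi_half)
  finally show ?thesis
    by (simp add: cis_conv_exp mult.commute)
qed

lemma
  assumes "algebra_norm N"
  shows algebra_norm_nonneg: "T \<in> BH \<Longrightarrow> 0 \<le> N T"
    and algebra_norm_op_scale: "T \<in> BH \<Longrightarrow> N (op_scale c T) = cmod c * N T"
    and algebra_norm_add_le: "T \<in> BH \<Longrightarrow> S \<in> BH \<Longrightarrow> N (\<lambda>x. T x + S x) \<le> N T + N S"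
    and algebra_norm_comp_le: "T \<in> BH \<Longrightarrow> S \<in> BH \<Longrightarrow> N (T \<circ> S) \<le> N T * N S"
  using assms unfolding algebra_norm_def by blast+

lemma algebra_norm_op_Re_le:
  fixes A :: "'a::chilbert_space \<Rightarrow> 'a"
  assumes N: "algebra_norm N" and A: "A \<in> BH"
  shows "N (op_Re A) \<le> (N A + N (cadjoint A)) / 2"
  using algebra_norm_add_le[OF N A cadjoint_BH[OF A]]
  unfolding op_Re_eq_op_scale algebra_norm_op_scale[OF N BH_add[OF A cadjoint_BH[OF A]]]
  by simp

lemma op_Re_le_gen_numrad:
  fixes T :: "'a::chilbert_space \<Rightarrow> 'a"
  assumes N: "algebra_norm N" and T: "T \<in> BH"
  shows "N (op_Re (op_scale (exp (\<i> * complex_of_real \<theta>)) T)) \<le> gen_numrad N T"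
proof -
  \<comment> \<open>Without an upper bound the SUP in gen_numrad would be a junk value.\<close>
  have "N (op_Re (op_scale (exp (\<i> * complex_of_real \<theta>')) T)) \<le> (N T + N (cadjoint T)) / 2"
    for \<theta>'
    using algebra_norm_op_Re_le[OF N BH_op_scale[OF T], of "exp (\<i> * complex_of_real \<theta>')"]
    by (simp add: cadjoint_op_scale[OF T] algebra_norm_op_scale[OF N] T cadjoint_BH)
  then have "bdd_above (range (\<lambda>\<theta>. N (op_Re (op_scale (exp (\<i> * complex_of_real \<theta>)) T))))"
    by (intro bdd_aboveI[where M = "(N T + N (cadjoint T)) / 2"]) auto
  then show ?thesis
    unfolding gen_numrad_def by (rule cSUP_upper[rotated]) simp
qed

lemma op_Im_le_gen_numrad:
  fixes T :: "'a::chilbert_space \<Rightarrow> 'a"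
  assumes N: "algebra_norm N" and T: "T \<in> BH"
  shows "N (op_Im (op_scale (exp (\<i> * complex_of_real \<theta>)) T)) \<le> gen_numrad N T"
  unfolding op_Im_op_scale[OF T] exp_i_diff_pi_half[symmetric]
  by (rule op_Re_le_gen_numrad[OF N T])

lemma algebra_norm_adjoint_products_le:
  fixes A :: "'a::chilbert_space \<Rightarrow> 'a"
  assumes N: "algebra_norm N" and A: "A \<in> BH"
  shows "N (\<lambda>x. A (cadjoint A x) + cadjoint A (A x)) \<le> 2 * ((N (op_Re A))\<^sup>2 + (N (op_Im A))\<^sup>2)"
proof -
  have Re: "op_Re A \<in> BH" and Im: "op_Im A \<in> BH"
    using A by (rule op_Re_BH, rule op_Im_BH)
  have "N (\<lambda>x. A (cadjoint A x) + cadjoint A (A x)) / 2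
      = N (\<lambda>x. (op_Re A \<circ> op_Re A) x + (op_Im A \<circ> op_Im A) x)"
    using op_Re_square_add_op_Im_square[OF A] algebra_norm_op_scale[OF N, of _ "1/2"]
      BH_add[OF BH_comp[OF A cadjoint_BH[OF A]] BH_comp[OF cadjoint_BH[OF A] A]]
    by (simp add: o_def)
  also have "\<dots> \<le> N (op_Re A) * N (op_Re A) + N (op_Im A) * N (op_Im A)"
    using algebra_norm_add_le[OF N BH_comp[OF Re Re] BH_comp[OF Im Im]]
      algebra_norm_comp_le[OF N Re Re] algebra_norm_comp_le[OF N Im Im]
    by linarith
  finally show ?thesis
    by (simp add: power2_eq_square)
qed

theorem theorem2p3:
  fixes T :: "'a::chilbert_space \<Rightarrow> 'a" and N :: "('a \<Rightarrow> 'a) \<Rightarrow> real"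
  assumes "T \<in> BH" and "algebra_norm N"
  shows "N (\<lambda>x. T (cadjoint T x) + cadjoint T (T x)) / 4
          + 1/2 * (SUP \<phi>::real.
               \<bar>(N (op_Re (op_scale (exp (\<i> * complex_of_real \<phi>)) T)))\<^sup>2
                - (N (op_Im (op_scale (exp (\<i> * complex_of_real \<phi>)) T)))\<^sup>2\<bar>)
         \<le> (gen_numrad N T)\<^sup>2"
proof -
  let ?A = "\<lambda>\<phi>::real. op_scale (exp (\<i> * complex_of_real \<phi>)) T"
  define P where "P = N (\<lambda>x. T (cadjoint T x) + cadjoint T (T x))"
  define w where "w = gen_numrad N T"
  have "\<bar>(N (op_Re (?A \<phi>)))\<^sup>2 - (N (op_Im (?A \<phi>)))\<^sup>2\<bar> \<le> 2 * w\<^sup>2 - P / 2" for \<phi>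
  proof -
    have A: "?A \<phi> \<in> BH"
      using \<open>T \<in> BH\<close> by (rule BH_op_scale)
    have "P \<le> 2 * ((N (op_Re (?A \<phi>)))\<^sup>2 + (N (op_Im (?A \<phi>)))\<^sup>2)"
      using algebra_norm_adjoint_products_le[OF assms(2) A]
      unfolding P_def adjoint_products_op_scale[OF assms(1) norm_exp_i_times] by simp
    moreover have "(N (op_Re (?A \<phi>)))\<^sup>2 \<le> w\<^sup>2"
      using op_Re_le_gen_numrad[OF assms(2,1)] algebra_norm_nonneg[OF assms(2) op_Re_BH[OF A]]
      unfolding w_def by (rule power_mono)
    moreover have "(N (op_Im (?A \<phi>)))\<^sup>2 \<le> w\<^sup>2"
      using op_Im_le_gen_numrad[OF assms(2,1)] algebra_norm_nonneg[OF assms(2) op_Im_BH[OF A]]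
      unfolding w_def by (rule power_mono)
    ultimately show ?thesis
      by (simp add: abs_le_iff)
  qed
  then have "(SUP \<phi>. \<bar>(N (op_Re (?A \<phi>)))\<^sup>2 - (N (op_Im (?A \<phi>)))\<^sup>2\<bar>) \<le> 2 * w\<^sup>2 - P / 2"
    by (intro cSUP_least) auto
  then show ?thesis
    unfolding P_def w_def by simp
qed

end
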